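(* For all $m\geq 1$ and $n\in\mathbb N$, \[ s_{n,m}(122,123)=\frac{1}{mn+1}\binom{(m+1)n}{n}. \]
   Context: $[n]_m=\{1^m,\ldots,n^m\}$; a permutation of $[n]_m$ is a sequence of length $nm$ in which each element of $[n]$ appears exactly $m$ times (for $n=0$ only the empty sequence). A sequence avoids a pattern $\pi$ if it has no subsequence order-isomorphic to $\pi$ (same relative order and same equalities among entries). $s_{n,m}(\Pi)$ is the number of permutations of $[n]_m$ avoiding all patterns in $\Pi$. *)

theory Defs
  imports Complex_Main "HOL-Library.Sublist"
begin

definition multiperm :: "nat \<Rightarrow> nat \<Rightarrow> nat list \<Rightarrow> bool" where
  "multiperm n m w \<longleftrightarrow> length w = n * m \<and> set w \<subseteq> {1..n} \<and>
     (\<forall>i\<in>{1..n}. count_list w i = m)"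

definition order_iso :: "nat list \<Rightarrow> nat list \<Rightarrow> bool" where
  "order_iso u p \<longleftrightarrow> length u = length p \<and>
     (\<forall>i<length u. \<forall>j<length u. (u!i < u!j \<longleftrightarrow> p!i < p!j) \<and> (u!i = u!j \<longleftrightarrow> p!i = p!j))"

definition contains_pat :: "nat list \<Rightarrow> nat list \<Rightarrow> bool" where
  "contains_pat w p \<longleftrightarrow> (\<exists>u. subseq u w \<and> order_iso u p)"

definition avoids_all :: "nat list \<Rightarrow> nat list set \<Rightarrow> bool" where
  "avoids_all w \<Pi> \<longleftrightarrow> (\<forall>p\<in>\<Pi>. \<not> contains_pat w p)"

definition s_count :: "nat \<Rightarrow> nat \<Rightarrow> nat list set \<Rightarrow> nat" where
  "s_count n m \<Pi> = card {w. multiperm n m w \<and> avoids_all w \<Pi>}"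

end

theory Submission
  imports Defs
begin

text \<open>A word avoids 122 and 123 iff, for every entry x, the later entries exceeding x occur in
  strictly decreasing order. In such a word on [n+1]_m all but the last copy of the maximum n+1 form
  a prefix, and the last copy sits right after a weakly decreasing prefix of the remaining avoider w
  on [n]_m; conversely every such position works. If L is the length of the longest weakly
  decreasing prefix of w, inserting at position j gives a child whose longest weakly decreasing
  prefix has length m + L for j = 0 and m - 1 + j otherwise. So the avoiders form a generating tree with rule
  (L) \<rightarrow> (m)(m+1)...(m+L) and root label 0, and the number of nodes at depth k below a node labelled L
  has the ballot-type closed form C((m+1)k+L, k) - m C((m+1)k+L, k-1), which for L = 0 and k = n
  is the Fuss-Catalan number C((m+1)n, n)/(mn+1).\<close>

lemma order_iso_length3:
  assumes "order_iso u p" "length p = 3"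
  obtains a b c where "u = [a,b,c]"
  using assms by (auto simp: order_iso_def numeral_3_eq_3 length_Suc_conv)

lemma order_iso3:
  "order_iso [a,b,c] [1,2,2] \<longleftrightarrow> a < b \<and> b = c"
  "order_iso [a,b,c] [1,2,3] \<longleftrightarrow> a < b \<and> b < c"
  unfolding order_iso_def by (simp add: All_less_Suc numeral_3_eq_3; arith)+

lemma contains_pat_length3:
  assumes "length p = 3"
  shows "contains_pat w p \<longleftrightarrow> (\<exists>a b c. subseq [a,b,c] w \<and> order_iso [a,b,c] p)"
  unfolding contains_pat_def using order_iso_length3[OF _ assms] by blast

lemma avoids_122_123_iff:
  "avoids_all w {[1,2,2],[1,2,3]} \<longleftrightarrow> \<not> (\<exists>a b c. subseq [a,b,c] w \<and> a < b \<and> b \<le> c)"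
proof -
  have "contains_pat w [1,2,2] \<longleftrightarrow> (\<exists>a b c. subseq [a,b,c] w \<and> a < b \<and> b = c)"
    using contains_pat_length3[of "[1,2,2]" w] by (simp only: order_iso3) simp
  moreover have "contains_pat w [1,2,3] \<longleftrightarrow> (\<exists>a b c. subseq [a,b,c] w \<and> a < b \<and> b < c)"
    using contains_pat_length3[of "[1,2,3]" w] by (simp only: order_iso3) simp
  ultimately show ?thesis
    unfolding avoids_all_def le_less by blast
qed

fun above_decreasing :: "'a::linorder list \<Rightarrow> bool" where
  "above_decreasing [] = True"
| "above_decreasing (x # xs) \<longleftrightarrow> sorted_wrt (>) (filter ((<) x) xs) \<and> above_decreasing xs"

lemma subseq_Cons_Cons_iff:
  "subseq (x # xs) (y # ys) \<longleftrightarrow> subseq (x # xs) ys \<or> (x = y \<and> subseq xs ys)"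
  by (auto dest: subseq_Cons')

lemma sorted_wrt_filter_greater_iff:
  fixes x :: "'a::linorder"
  shows "sorted_wrt (>) (filter ((<) x) xs) \<longleftrightarrow> \<not> (\<exists>b c. subseq [b,c] xs \<and> x < b \<and> b \<le> c)"
proof (induction xs)
  case Nil
  then show ?case by simp
next
  case (Cons y ys)
  have sorted_Cons: "sorted_wrt (>) (filter ((<) x) (y # ys)) \<longleftrightarrow>
        sorted_wrt (>) (filter ((<) x) ys) \<and> (x < y \<longrightarrow> (\<forall>z\<in>set ys. x < z \<longrightarrow> z < y))"
    by auto
  have pair_Cons: "(\<exists>b c. subseq [b,c] (y # ys) \<and> x < b \<and> b \<le> c) \<longleftrightarrow>
      (\<exists>b c. subseq [b,c] ys \<and> x < b \<and> b \<le> c) \<or> (x < y \<and> (\<exists>c\<in>set ys. y \<le> c))"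
    unfolding subseq_Cons_Cons_iff subseq_singleton_left by blast
  show ?case
    unfolding sorted_Cons pair_Cons Cons.IH by (auto simp: not_less intro: less_le_trans)
qed

lemma above_decreasing_iff:
  "above_decreasing w \<longleftrightarrow> \<not> (\<exists>a b c. subseq [a,b,c] w \<and> a < b \<and> b \<le> c)"
proof (induction w)
  case Nil
  then show ?case by simp
next
  case (Cons y ys)
  then show ?case
    unfolding above_decreasing.simps subseq_Cons_Cons_iff sorted_wrt_filter_greater_iff by blast
qed

lemma above_decreasing_replicate_max:
  "\<forall>x\<in>set ys. x \<le> c \<Longrightarrow> above_decreasing (replicate r c @ ys) \<longleftrightarrow> above_decreasing ys"
  by (induction r) (auto simp: filter_empty_conv not_less)

lemma sorted_wrt_greater_append_Cons:
  fixes c :: "'a::linorder"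
  assumes "\<forall>z\<in>set (xs @ ys). z < c"
  shows "sorted_wrt (>) (xs @ c # ys) \<longleftrightarrow> xs = [] \<and> sorted_wrt (>) ys"
  using assms by (cases xs) auto

lemma above_decreasing_insert_max:
  assumes "\<forall>x\<in>set (X @ Y). x < c"
  shows "above_decreasing (X @ c # Y) \<longleftrightarrow> sorted_wrt (\<ge>) X \<and> above_decreasing (X @ Y)"
  using assms
proof (induction X)
  case Nil
  then have "filter ((<) c) Y = []"
    by (auto simp: filter_empty_conv)
  then show ?case by simp
next
  case (Cons x X)
  have X_below: "filter ((<) x) X = [] \<longleftrightarrow> (\<forall>z\<in>set X. z \<le> x)"
    by (auto simp: filter_empty_conv not_less)
  have "\<forall>z\<in>set (filter ((<) x) X @ filter ((<) x) Y). z < c"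
    using Cons.prems by auto
  with Cons X_below show ?case
    by (auto simp: sorted_wrt_greater_append_Cons)
qed

fun decr_prefix_length :: "'a::linorder list \<Rightarrow> nat" where
  "decr_prefix_length [] = 0"
| "decr_prefix_length [x] = 1"
| "decr_prefix_length (x # y # xs) = (if y \<le> x then Suc (decr_prefix_length (y # xs)) else 1)"

lemma le_decr_prefix_length_iff:
  "j \<le> decr_prefix_length w \<longleftrightarrow> j \<le> length w \<and> sorted_wrt (\<ge>) (take j w)"
proof (induction w arbitrary: j rule: decr_prefix_length.induct)
  case (3 x y xs)
  show ?case
  proof (cases j)
    case (Suc j')
    have "sorted_wrt (\<ge>) (take j (x # y # xs)) \<longleftrightarrow>
          (j' = 0 \<or> y \<le> x) \<and> sorted_wrt (\<ge>) (take j' (y # xs))"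
      using Suc by (cases j') (auto intro: order_trans)
    with Suc "3.IH" show ?thesis
      by (cases j') auto
  qed simp
qed (auto simp: le_Suc_eq)

lemma decr_prefix_length_le_length: "decr_prefix_length w \<le> length w"
  using le_decr_prefix_length_iff by blast

lemma decr_prefix_length_Cons_max:
  "\<forall>x\<in>set w. x \<le> c \<Longrightarrow> decr_prefix_length (c # w) = Suc (decr_prefix_length w)"
  by (cases w) auto

lemma decr_prefix_length_replicate_max:
  "\<forall>x\<in>set w. x \<le> c \<Longrightarrow> decr_prefix_length (replicate r c @ w) = r + decr_prefix_length w"
proof (induction r)
  case (Suc r)
  then have "\<forall>x\<in>set (replicate r c @ w). x \<le> c"
    by auto
  with Suc show ?case
    by (simp add: decr_prefix_length_Cons_max)
qed simp

lemma decr_prefix_length_insert_max: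
  assumes "X \<noteq> []" "sorted_wrt (\<ge>) X" "\<forall>x\<in>set X. x < c"
  shows "decr_prefix_length (X @ c # Y) = length X"
proof -
  have "length X \<le> decr_prefix_length (X @ c # Y)"
    using assms(2) by (simp add: le_decr_prefix_length_iff)
  moreover have "\<not> Suc (length X) \<le> decr_prefix_length (X @ c # Y)"
    using assms(1,3) last_in_set by (fastforce simp: le_decr_prefix_length_iff sorted_wrt_append not_le)
  ultimately show ?thesis
    by simp
qed

lemma count_list_replicate: "count_list (replicate r c) x = (if c = x then r else 0)"
  by (induction r) auto

lemma multiperm_Suc_iff:
  assumes "m \<ge> 1" and "Suc n \<notin> set w" and "count_list v (Suc n) = m"
    and "\<And>i. i \<noteq> Suc n \<Longrightarrow> count_list v i = count_list w i"
    and "length v = length w + m"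
  shows "multiperm (Suc n) m v \<longleftrightarrow> multiperm n m w"
proof -
  have "set v = insert (Suc n) (set w)"
  proof (intro set_eqI)
    fix x
    show "x \<in> set v \<longleftrightarrow> x \<in> insert (Suc n) (set w)"
      using assms(1-4) count_list_0_iff[of v x] count_list_0_iff[of w x]
      by (cases "x = Suc n") (simp_all del: count_notin)
  qed
  moreover have "{1..Suc n} = insert (Suc n) {1..n}"
    by auto
  ultimately have "set v \<subseteq> {1..Suc n} \<longleftrightarrow> set w \<subseteq> {1..n}"
    and "(\<forall>i\<in>{1..Suc n}. count_list v i = m) \<longleftrightarrow> (\<forall>i\<in>{1..n}. count_list w i = m)"
    using assms(2-4) by auto
  then show ?thesis
    unfolding multiperm_def using assms(5) by auto
qed

lemma max_letter_split:
  fixes v :: "'a::linorder list"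
  assumes free: "\<not> (\<exists>a. subseq [a,c,c] v \<and> a < c)"
    and max: "\<forall>x\<in>set v. x \<le> c" and "c \<in> set v"
  obtains X Y where "v = replicate (count_list v c - 1) c @ X @ c # Y" "c \<notin> set X" "c \<notin> set Y"
proof -
  define Z where "Z = takeWhile ((=) c) v"
  define u where "u = dropWhile ((=) c) v"
  have v: "v = replicate (length Z) c @ u"
    unfolding Z_def u_def by (metis (mono_tags) replicate_length_same set_takeWhileD takeWhile_dropWhile_id)
  show ?thesis
  proof (cases "c \<in> set u")
    case False
    with v \<open>c \<in> set v\<close> obtain k where "length Z = Suc k"
      by (cases "length Z") auto
    with v False show ?thesis
      by (intro that[of "[]" u]) (simp_all add: count_list_replicate replicate_app_Cons_same)
  next
    case True
    then obtain X Y where u: "u = X @ c # Y" and cX: "c \<notin> set X"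
      by (meson split_list_first)
    have "X \<noteq> []"
      using u hd_dropWhile[of "(=) c" v] unfolding u_def by fastforce
    have "hd X < c"
      using max cX v u hd_in_set[OF \<open>X \<noteq> []\<close>] by (auto simp: order.order_iff_strict)
    have cY: "c \<notin> set Y"
    proof
      assume "c \<in> set Y"
      then have "subseq [c, c] (c # Y)"
        by (simp add: subseq_singleton_left)
      moreover have "subseq [hd X] X"
        using \<open>X \<noteq> []\<close> by (simp add: subseq_singleton_left)
      ultimately have "subseq [hd X, c, c] v"
        using list_emb_append_mono[of "(=)" "[hd X]" X "[c, c]" "c # Y"] v u by auto
      then show False
        using free \<open>hd X < c\<close> by blast
    qed
    show ?thesis
      using v u cX cY by (intro that[of X Y]) (simp_all add: count_list_replicate)
  qed
qed

definition avoiders :: "nat \<Rightarrow> nat \<Rightarrow> nat list set" where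
  "avoiders m n = {w. multiperm n m w \<and> above_decreasing w}"

definition insert_top :: "nat \<Rightarrow> 'a \<Rightarrow> 'a list \<Rightarrow> nat \<Rightarrow> 'a list" where
  "insert_top m c w j = replicate (m - 1) c @ take j w @ c # drop j w"

lemma avoiders_less: "w \<in> avoiders m n \<Longrightarrow> \<forall>x\<in>set w. x < Suc n"
  unfolding avoiders_def multiperm_def by auto

lemma multiperm_insert_top_iff:
  assumes "m \<ge> 1" "Suc n \<notin> set w"
  shows "multiperm (Suc n) m (insert_top m (Suc n) w j) \<longleftrightarrow> multiperm n m w"
proof (rule multiperm_Suc_iff)
  have "count_list (take j w) i + count_list (drop j w) i = count_list w i" for i
    by (metis append_take_drop_id count_list_append)
  then show "\<And>i. i \<noteq> Suc n \<Longrightarrow> count_list (insert_top m (Suc n) w j) i = count_list w i"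
    by (simp add: insert_top_def count_list_replicate)
  have "Suc n \<notin> set (take j w)" "Suc n \<notin> set (drop j w)"
    using assms(2) by (auto dest: in_set_takeD in_set_dropD)
  with assms(1) show "count_list (insert_top m (Suc n) w j) (Suc n) = m"
    by (simp add: insert_top_def count_list_replicate)
qed (use assms in \<open>auto simp: insert_top_def\<close>)

lemma decr_prefix_length_insert_top:
  assumes "m \<ge> 1" "\<forall>x\<in>set w. x < c" "j \<le> decr_prefix_length w"
  shows "decr_prefix_length (insert_top m c w j) =
           (if j = 0 then m + decr_prefix_length w else m - 1 + j)"
proof -
  have j: "j \<le> length w" "sorted_wrt (\<ge>) (take j w)"
    using assms(3) le_decr_prefix_length_iff by blast+
  have "\<forall>x\<in>set (take j w @ c # drop j w). x \<le> c"
    using assms(2) by (fastforce dest: in_set_takeD in_set_dropD)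
  then have "decr_prefix_length (insert_top m c w j) = m - 1 + decr_prefix_length (take j w @ c # drop j w)"
    unfolding insert_top_def by (rule decr_prefix_length_replicate_max)
  moreover have "decr_prefix_length (take j w @ c # drop j w) =
                   (if j = 0 then Suc (decr_prefix_length w) else j)"
  proof (cases "j = 0")
    case True
    with assms(2) show ?thesis
      by (simp add: decr_prefix_length_Cons_max less_imp_le)
  next
    case False
    with j have "take j w \<noteq> []"
      by (cases w) auto
    moreover have "\<forall>x\<in>set (take j w). x < c"
      using assms(2) by (auto dest: in_set_takeD)
    ultimately show ?thesis
      using False j by (simp add: decr_prefix_length_insert_max)
  qed
  ultimately show ?thesis
    using assms(1) by simp
qed

lemma insert_top_in_avoiders:
  assumes "m \<ge> 1" "w \<in> avoiders m n" "j \<le> decr_prefix_length w"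
  shows "insert_top m (Suc n) w j \<in> avoiders m (Suc n)"
proof -
  have less: "\<forall>x\<in>set (take j w @ drop j w). x < Suc n"
    using avoiders_less[OF assms(2)] by simp
  have "sorted_wrt (\<ge>) (take j w)"
    using assms(3) le_decr_prefix_length_iff by blast
  then have "above_decreasing (take j w @ Suc n # drop j w)"
    using assms(2) above_decreasing_insert_max[OF less] by (simp add: avoiders_def)
  moreover have "\<forall>x\<in>set (take j w @ Suc n # drop j w). x \<le> Suc n"
    using avoiders_less[OF assms(2)] by (fastforce dest: in_set_takeD in_set_dropD)
  ultimately have "above_decreasing (insert_top m (Suc n) w j)"
    unfolding insert_top_def by (simp add: above_decreasing_replicate_max)
  with assms(1,2) show ?thesis
    using less by (auto simp: avoiders_def multiperm_insert_top_iff)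
qed

lemma inj_on_insert_top:
  "inj_on (\<lambda>(w, j). insert_top m c w j) {(w, j). c \<notin> set w \<and> j \<le> length w}"
proof (rule inj_onI, clarsimp)
  fix w j w' j'
  assume "c \<notin> set w" "j \<le> length w" "c \<notin> set w'" "j' \<le> length w'"
    and "insert_top m c w j = insert_top m c w' j'"
  then have "take j w @ c # drop j w = take j' w' @ c # drop j' w'"
    by (simp add: insert_top_def)
  with \<open>c \<notin> set w\<close> \<open>c \<notin> set w'\<close> have "take j w = take j' w'" "drop j w = drop j' w'"
    using append_Cons_eq_iff[of c "take j w" "drop j w"] by (auto dest: in_set_takeD in_set_dropD)
  then show "w = w' \<and> j = j'"
    using \<open>j \<le> length w\<close> \<open>j' \<le> length w'\<close> by (metis append_take_drop_id length_take min.absorb2)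
qed

lemma finite_avoiders: "finite (avoiders m n)"
proof (rule finite_subset)
  show "avoiders m n \<subseteq> {xs. set xs \<subseteq> {1..n} \<and> length xs = n * m}"
    unfolding avoiders_def multiperm_def by blast
qed (simp add: finite_lists_length_eq)

lemma avoiders_0: "avoiders m 0 = {[]}"
  unfolding avoiders_def multiperm_def by auto

lemma avoiders_Suc:
  assumes "m \<ge> 1"
  shows "avoiders m (Suc n) =
           (\<lambda>(w, j). insert_top m (Suc n) w j) ` (SIGMA w:avoiders m n. {..decr_prefix_length w})"
proof (intro equalityI subsetI)
  fix v
  assume "v \<in> avoiders m (Suc n)"
  then have mp: "multiperm (Suc n) m v" and ad: "above_decreasing v"
    by (simp_all add: avoiders_def)
  then have le: "\<forall>x\<in>set v. x \<le> Suc n" and cnt: "count_list v (Suc n) = m"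
    by (auto simp: multiperm_def)
  with assms have "Suc n \<in> set v"
    by (metis count_notin not_one_le_zero)
  moreover have "\<not> (\<exists>a. subseq [a, Suc n, Suc n] v \<and> a < Suc n)"
    using ad above_decreasing_iff by blast
  ultimately obtain X Y where v: "v = replicate (m - 1) (Suc n) @ X @ Suc n # Y"
    and X: "Suc n \<notin> set X" and Y: "Suc n \<notin> set Y"
    using max_letter_split le cnt by metis
  define w where "w = X @ Y"
  have v_eq: "v = insert_top m (Suc n) w (length X)"
    by (simp add: v w_def insert_top_def)
  have less: "\<forall>x\<in>set (X @ Y). x < Suc n"
  proof
    fix x
    assume "x \<in> set (X @ Y)"
    with le X Y v have "x \<le> Suc n" "x \<noteq> Suc n"
      by auto
    then show "x < Suc n"
      by simp
  qed
  have "\<forall>x\<in>set (X @ Suc n # Y). x \<le> Suc n"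
    using less by (auto simp: less_imp_le)
  then have "above_decreasing (X @ Suc n # Y)"
    using ad v above_decreasing_replicate_max by metis
  then have "sorted_wrt (\<ge>) X" and "above_decreasing w"
    using above_decreasing_insert_max[OF less] by (simp_all add: w_def)
  moreover have "multiperm n m w"
    using mp v_eq multiperm_insert_top_iff[OF assms] X Y by (simp add: w_def)
  ultimately show "v \<in> (\<lambda>(w, j). insert_top m (Suc n) w j) ` (SIGMA w:avoiders m n. {..decr_prefix_length w})"
    using v_eq by (auto simp: avoiders_def le_decr_prefix_length_iff w_def)
next
  fix v
  assume "v \<in> (\<lambda>(w, j). insert_top m (Suc n) w j) ` (SIGMA w:avoiders m n. {..decr_prefix_length w})"
  then show "v \<in> avoiders m (Suc n)"
    using insert_top_in_avoiders[OF assms] by auto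
qed

fun descendants :: "nat \<Rightarrow> nat \<Rightarrow> nat \<Rightarrow> nat" where
  "descendants m 0 L = 1"
| "descendants m (Suc k) L = (\<Sum>i\<le>L. descendants m k (m + i))"

lemma sum_children_labels:
  fixes m L :: nat
  assumes "m \<ge> 1"
  shows "(\<Sum>j\<le>L. f (if j = 0 then m + L else m - 1 + j)) = (\<Sum>i\<le>L. f (m + i))"
proof (cases L)
  case (Suc L')
  with assms have "(\<Sum>j\<le>L. f (if j = 0 then m + L else m - 1 + j)) = f (m + L) + (\<Sum>i\<le>L'. f (m + i))"
    by (simp add: sum.atMost_Suc_shift del: sum.atMost_Suc)
  with Suc show ?thesis
    by (simp add: add.commute)
qed simp

lemma sum_descendants_avoiders:
  assumes "m \<ge> 1"
  shows "(\<Sum>w\<in>avoiders m n. descendants m k (decr_prefix_length w)) = descendants m (n + k) 0"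
proof (induction n arbitrary: k)
  case 0
  show ?case
    by (simp add: avoiders_0)
next
  case (Suc n)
  let ?ins = "\<lambda>(w, j). insert_top m (Suc n) w j"
  let ?S = "SIGMA w:avoiders m n. {..decr_prefix_length w}"
  have inj: "inj_on ?ins ?S"
    using inj_on_insert_top by (rule inj_on_subset)
      (auto dest: avoiders_less intro: order_trans[OF _ decr_prefix_length_le_length])
  have "(\<Sum>w\<in>avoiders m (Suc n). descendants m k (decr_prefix_length w)) =
        (\<Sum>(w, j)\<in>?S. descendants m k (decr_prefix_length (insert_top m (Suc n) w j)))"
    unfolding avoiders_Suc[OF assms] sum.reindex[OF inj] by (simp add: case_prod_unfold)
  also have "\<dots> = (\<Sum>w\<in>avoiders m n. \<Sum>j\<le>decr_prefix_length w.
                    descendants m k (decr_prefix_length (insert_top m (Suc n) w j)))"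
    by (simp add: sum.Sigma[symmetric] finite_avoiders)
  also have "\<dots> = (\<Sum>w\<in>avoiders m n. \<Sum>j\<le>decr_prefix_length w.
                    descendants m k (if j = 0 then m + decr_prefix_length w else m - 1 + j))"
    by (intro sum.cong refl) (simp add: decr_prefix_length_insert_top[OF assms avoiders_less])
  also have "\<dots> = (\<Sum>w\<in>avoiders m n. descendants m (Suc k) (decr_prefix_length w))"
    by (simp add: sum_children_labels[OF assms])
  also have "\<dots> = descendants m (Suc n + k) 0"
    unfolding Suc.IH add_Suc_shift ..
  finally show ?case .
qed

text \<open>The explicit case avoids the truncated k - 1 at k = 0.\<close>

definition ballot :: "nat \<Rightarrow> nat \<Rightarrow> nat \<Rightarrow> int" where
  "ballot m k L = int (((m + 1) * k + L) choose k)
     - int m * (if k = 0 then 0 else int (((m + 1) * k + L) choose (k - 1)))"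

lemma Suc_times_binomial_Suc: "Suc k * (n choose Suc k) = (n - k) * (n choose k)"
  by (simp only: binomial_absorption binomial_absorb_comp)

lemma binomial_Suc_int:
  "int (Suc n choose k) = int (n choose k) + (if k = 0 then 0 else int (n choose (k - 1)))"
  by (cases k) auto

lemma ballot_Suc_0: "ballot m (Suc k) 0 = ballot m k m"
proof -
  define A where "A = (m + 1) * k + m"
  have "Suc k * (A choose Suc k) = Suc k * (m * (A choose k))"
    unfolding Suc_times_binomial_Suc by (simp add: A_def algebra_simps)
  then have "A choose Suc k = m * (A choose k)"
    by (metis Zero_not_Suc mult_left_cancel)
  then show ?thesis
    using binomial_Suc_int[of A k] binomial_Suc_int[of A "Suc k"]
    by (simp add: ballot_def A_def algebra_simps)
qed

lemma ballot_Suc_Suc: "ballot m (Suc k) (Suc L) = ballot m (Suc k) L + ballot m k (m + Suc L)"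
proof -
  define B where "B = (m + 1) * Suc k + L"
  have "(m + 1) * Suc k + Suc L = Suc B" "(m + 1) * k + (m + Suc L) = B"
    by (simp_all add: B_def)
  then show ?thesis
    using binomial_Suc_int[of B k] binomial_Suc_int[of B "Suc k"]
    by (simp add: ballot_def B_def algebra_simps)
qed

lemma descendants_eq_ballot: "int (descendants m k L) = ballot m k L"
proof (induction k arbitrary: L)
  case 0
  show ?case
    by (simp add: ballot_def)
next
  case (Suc k)
  note IH = Suc.IH
  show ?case
  proof (induction L)
    case 0
    show ?case
      using IH by (simp add: ballot_Suc_0)
  next
    case (Suc L)
    have "descendants m (Suc k) (Suc L) = descendants m (Suc k) L + descendants m k (m + Suc L)"
      by (simp only: descendants.simps sum.atMost_Suc)
    with Suc IH show ?case
      by (simp add: ballot_Suc_Suc)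
  qed
qed

lemma ballot_0_mult_eq_binomial: "ballot m n 0 * int (m * n + 1) = int (((m + 1) * n) choose n)"
proof (cases n)
  case 0
  then show ?thesis
    by (simp add: ballot_def)
next
  case (Suc k)
  define N where "N = (m + 1) * n"
  have "n * (N choose n) = (m * n + 1) * (N choose k)"
    using Suc_times_binomial_Suc[of k N] by (simp add: Suc N_def algebra_simps)
  then have absorb: "int (m * n + 1) * int (N choose k) = int n * int (N choose n)"
    by (metis of_nat_mult)
  have ballot_eq: "ballot m n 0 = int (N choose n) - int m * int (N choose k)"
    by (simp add: ballot_def N_def Suc)
  have "ballot m n 0 * int (m * n + 1)
        = int (N choose n) * int (m * n + 1) - int m * (int (m * n + 1) * int (N choose k))"
    unfolding ballot_eq by algebra
  also have "\<dots> = int (N choose n)"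
    unfolding absorb by (simp add: algebra_simps)
  finally show ?thesis
    by (simp add: N_def)
qed

lemma s_count_122_123_eq_descendants:
  assumes "m \<ge> 1"
  shows "s_count n m {[1,2,2],[1,2,3]} = descendants m n 0"
proof -
  have "s_count n m {[1,2,2],[1,2,3]} = card (avoiders m n)"
    unfolding s_count_def avoiders_def avoids_122_123_iff above_decreasing_iff ..
  also have "\<dots> = (\<Sum>w\<in>avoiders m n. descendants m 0 (decr_prefix_length w))"
    by simp
  also have "\<dots> = descendants m n 0"
    using sum_descendants_avoiders[OF assms, where k = 0] by simp
  finally show ?thesis .
qed

theorem theorem4:
  fixes n m :: nat
  assumes "m \<ge> 1"
  shows "(of_nat (s_count n m {[1,2,2], [1,2,3]}) :: rat)
           = of_nat (((m + 1) * n) choose n) / of_nat (m * n + 1)"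
proof -
  have "int (s_count n m {[1,2,2], [1,2,3]}) * int (m * n + 1) = int (((m + 1) * n) choose n)"
    using ballot_0_mult_eq_binomial s_count_122_123_eq_descendants[OF assms] descendants_eq_ballot by simp
  then have "s_count n m {[1,2,2], [1,2,3]} * (m * n + 1) = ((m + 1) * n) choose n"
    by (simp only: of_nat_mult[symmetric] of_nat_eq_iff)
  then have "(of_nat (s_count n m {[1,2,2], [1,2,3]}) :: rat) * of_nat (m * n + 1)
               = of_nat (((m + 1) * n) choose n)"
    by (metis of_nat_mult)
  then show ?thesis
    by (simp add: eq_divide_eq del: of_nat_Suc)
qed

end
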